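(* Let $M$ be a $3$-manifold smoothly embedded in $\mathbb R^3$ and let $f\colon M\setminus\mathcal S\to\mathcal O_3$ be a $3$-frame field with singularity set $\mathcal S$. Then every isolated point singularity $s\in\mathcal S$ (i.e. a point of $\mathcal S$ having a neighbourhood in $M$ meeting $\mathcal S$ only in $s$) that does not lie on $\partial M$ is redundant.
   Context: $\mathcal O_3:=O(3)/\mathcal B_3\cong SO(3)/\mathcal D_3$, where $\mathcal B_3$ is the group of $3\times3$ signed permutation matrices acting by right multiplication and $\mathcal D_3$ its positive-determinant subgroup (the space of orthogonal frames with unordered, undirected axes). A $3$-frame field on $M\subseteq\mathbb R^3$ with singularity set $\mathcal S$ is a continuous map $M\setminus\mathcal S\to\mathcal O_3$; it is boundary-aligned if at every point of $\partial M\setminus\mathcal S$ one axis is normal to $\partial M$. For $B\subseteq M$, $\mathrm{Int}_M(B)$ is its interior as a subspace of $M$. With $N=M\setminus\mathcal S$, a subset $U\subseteq\mathcal S$ is redundant if there exist a closed $B'\subseteq M$ and a frame field $f'\colon N\cup\mathrm{Int}_M(B')\to\mathcal O_3$ with $U\subseteq\mathrm{Int}_M(B')$ and $f'=f$ on $N\setminus\mathrm{Int}_M(B')$, where $f'$ must be boundary-aligned if $f$ is. *)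

theory Defs
  imports "HOL-Analysis.Analysis"
begin

type_synonym mat3 = "real^3^3"
type_synonym pt3 = "real^3"

definition signed_perm_matrix :: "mat3 \<Rightarrow> bool" where
  "signed_perm_matrix P \<longleftrightarrow>
     (\<exists>p s. p permutes (UNIV :: 3 set) \<and> (\<forall>i. s i = 1 \<or> s i = -1) \<and>
            P = (\<chi> i j. if j = p i then s i else 0))"

definition frame_of :: "mat3 \<Rightarrow> mat3 set" where
  "frame_of R = {R ** P | P. signed_perm_matrix P}"

definition O3_mats :: "mat3 set" where
  "O3_mats = {R. orthogonal_matrix R}"

definition frames3 :: "mat3 set set" where
  "frames3 = frame_of ` O3_mats"

definition frame_top :: "mat3 set topology" where
  "frame_top = topology (\<lambda>U. U \<subseteq> frames3 \<and>
       openin (top_of_set O3_mats) {R \<in> O3_mats. frame_of R \<in> U})"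

definition frame_axes :: "mat3 set \<Rightarrow> pt3 set" where
  "frame_axes F = {column i R | i R. R \<in> F}"

coinductive smooth_on :: "pt3 set \<Rightarrow> (pt3 \<Rightarrow> real) \<Rightarrow> bool" for U where
  "g differentiable_on U \<Longrightarrow>
   (\<forall>i. smooth_on U (\<lambda>x. frechet_derivative g (at x) (axis i 1))) \<Longrightarrow>
   smooth_on U g"

definition local_defining_fun :: "pt3 set \<Rightarrow> pt3 \<Rightarrow> pt3 set \<Rightarrow> (pt3 \<Rightarrow> real) \<Rightarrow> bool" where
  "local_defining_fun M p U g \<longleftrightarrow>
     open U \<and> p \<in> U \<and> smooth_on U g \<and> g p = 0 \<and>
     frechet_derivative g (at p) \<noteq> (\<lambda>v. 0) \<and>
     M \<inter> U = {x \<in> U. g x \<le> 0}"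

definition smooth_3manifold :: "pt3 set \<Rightarrow> bool" where
  "smooth_3manifold M \<longleftrightarrow>
     (\<forall>p \<in> M. p \<in> interior M \<or> (\<exists>U g. local_defining_fun M p U g))"

definition mbdry :: "pt3 set \<Rightarrow> pt3 set" where
  "mbdry M = M - interior M"

definition normal_at :: "pt3 set \<Rightarrow> pt3 \<Rightarrow> pt3 \<Rightarrow> bool" where
  "normal_at M p v \<longleftrightarrow> v \<noteq> 0 \<and>
     (\<exists>U g. local_defining_fun M p U g \<and>
        (\<forall>w. frechet_derivative g (at p) w = 0 \<longrightarrow> v \<bullet> w = 0))"

definition frame_field_on :: "pt3 set \<Rightarrow> (pt3 \<Rightarrow> mat3 set) \<Rightarrow> bool" where
  "frame_field_on A f \<longleftrightarrow> continuous_map (top_of_set A) frame_top f"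

definition boundary_aligned :: "pt3 set \<Rightarrow> pt3 set \<Rightarrow> (pt3 \<Rightarrow> mat3 set) \<Rightarrow> bool" where
  "boundary_aligned M A f \<longleftrightarrow>
     (\<forall>p \<in> mbdry M \<inter> A. \<exists>v \<in> frame_axes (f p). normal_at M p v)"

definition redundant :: "pt3 set \<Rightarrow> pt3 set \<Rightarrow> (pt3 \<Rightarrow> mat3 set) \<Rightarrow> pt3 set \<Rightarrow> bool" where
  "redundant M S f U \<longleftrightarrow> U \<subseteq> S \<and>
     (\<exists>B' f'. B' \<subseteq> M \<and> closedin (top_of_set M) B' \<and>
        U \<subseteq> (top_of_set M) interior_of B' \<and>
        frame_field_on ((M - S) \<union> (top_of_set M) interior_of B') f' \<and>
        (\<forall>x \<in> (M - S) - (top_of_set M) interior_of B'. f' x = f x) \<and>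
        (boundary_aligned M (M - S) f \<longrightarrow>
           boundary_aligned M ((M - S) \<union> (top_of_set M) interior_of B') f'))"

end

theory Submission
  imports Defs
begin

text \<open>Through the quartic tensor \<open>\<Sum>\<^sub>i c\<^sub>i \<otimes> c\<^sub>i \<otimes> c\<^sub>i \<otimes> c\<^sub>i\<close> of its axes
  \<open>c\<^sub>i\<close>, the frame space \<open>O(3)/B\<^sub>3\<close> is homeomorphic to a compact subset of \<open>\<real>\<^sup>8\<^sup>1\<close>.
  Sending a unit quaternion to the tensor of its rotation matrix makes \<open>S\<^sup>3\<close> a covering space
  of that set: its fibres are the orbits of a finite group of right multiplications, which act
  by isometries. A frame field on a small sphere around an isolated interior singularity
  therefore lifts to a map \<open>S\<^sup>2 \<rightarrow> S\<^sup>3\<close>, which is null-homotopic, so the field extends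
  over the ball and the singularity can be removed.\<close>

section \<open>Unit quaternions and rotations\<close>

type_synonym quat = "real \<times> real \<times> real \<times> real"

fun qmul :: "quat \<Rightarrow> quat \<Rightarrow> quat" where
  "qmul (a1,b1,c1,d1) (a2,b2,c2,d2) =
    (a1*a2 - b1*b2 - c1*c2 - d1*d2, a1*b2 + b1*a2 + c1*d2 - d1*c2,
     a1*c2 - b1*d2 + c1*a2 + d1*b2, a1*d2 + b1*c2 - c1*b2 + d1*a2)"

fun qconj :: "quat \<Rightarrow> quat" where
  "qconj (a,b,c,d) = (a,-b,-c,-d)"

fun quat_rot :: "quat \<Rightarrow> mat3" where
  "quat_rot (w,x,y,z) = vector[
     vector[w*w+x*x-y*y-z*z, 2*(x*y - w*z), 2*(x*z + w*y)],
     vector[2*(x*y + w*z), w*w-x*x+y*y-z*z, 2*(y*z - w*x)],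
     vector[2*(x*z - w*y), 2*(y*z + w*x), w*w-x*x-y*y+z*z]]"

lemma power2_norm_quat: "(norm ((w,x,y,z)::quat))\<^sup>2 = w*w+x*x+y*y+z*z"
  by (simp add: norm_Pair power2_eq_square add.assoc)

lemma quat_rot_qmul: "quat_rot (qmul p q) = quat_rot p ** quat_rot q"
  by (cases p; cases q) (simp add: vec_eq_iff forall_3 matrix_matrix_mult_def sum_3 algebra_simps)

lemma quat_rot_qconj: "quat_rot (qconj q) = transpose (quat_rot q)"
  by (cases q) (simp add: vec_eq_iff forall_3 transpose_def algebra_simps)

lemma quat_rot_scaleR: "quat_rot (c *\<^sub>R q) = (c * c) *\<^sub>R quat_rot q"
  by (cases q) (simp add: vec_eq_iff forall_3 algebra_simps)

lemma quat_rot_one: "quat_rot (1,0,0,0) = mat 1"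
  by (simp add: vec_eq_iff forall_3 mat_def)

lemma qmul_assoc: "qmul (qmul p q) r = qmul p (qmul q r)"
  by (cases p; cases q; cases r) (simp add: algebra_simps)

lemma qmul_one [simp]: "qmul (1,0,0,0) q = q" "qmul q (1,0,0,0) = q"
  by (cases q, simp)+

lemma qmul_qconj: "qmul q (qconj q) = ((norm q)\<^sup>2, 0, 0, 0)" "qmul (qconj q) q = ((norm q)\<^sup>2, 0, 0, 0)"
  by (cases q, simp add: power2_norm_quat algebra_simps)+

lemma qmul_diff_left: "qmul a g - qmul b g = qmul (a - b) g"
  and qmul_diff_right: "qmul g a - qmul g b = qmul g (a - b)"
  by (cases g; cases a; cases b; simp add: algebra_simps)+

lemma norm_qmul: "norm (qmul p q) = norm p * norm q"
proof -
  have "(norm (qmul p q))\<^sup>2 = (norm p * norm q)\<^sup>2"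
    by (cases p; cases q) (simp only: qmul.simps power2_norm_quat power_mult_distrib, simp add: algebra_simps)
  then show ?thesis by (simp add: power2_eq_iff_nonneg)
qed

lemma norm_qconj: "norm (qconj q) = norm q"
  by (cases q) (simp add: norm_Pair)

lemma orthogonal_matrix_quat_rot:
  assumes "norm q = 1"
  shows "orthogonal_matrix (quat_rot q)"
  using quat_rot_qmul[of q "qconj q"] quat_rot_qmul[of "qconj q" q]
  unfolding orthogonal_matrix_def quat_rot_qconj qmul_qconj assms by (simp only: quat_rot_one power_one)

lemma rotation_matrix_entry_identities:
  fixes R :: mat3
  assumes "rotation_matrix R"
  defines "a \<equiv> R$1$1" and "b \<equiv> R$1$2" and "c \<equiv> R$1$3" and "d \<equiv> R$2$1" and "e \<equiv> R$2$2"
    and "f \<equiv> R$2$3" and "g \<equiv> R$3$1" and "h \<equiv> R$3$2" and "i \<equiv> R$3$3"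
  shows "c = d*h - e*g" "f = b*g - a*h" "i = a*e - b*d"
    "a = e*i - f*h" "d = c*h - b*i" "g = b*f - c*e"
    "b = f*g - d*i" "e = a*i - c*g" "h = c*d - a*f"
    "a*a+b*b+c*c = 1" "d*d+e*e+f*f = 1" "g*g+h*h+i*i = 1" "a*d+b*e+c*f = 0" "a*g+b*h+c*i = 0" "d*g+e*h+f*i = 0"
    "a*a+d*d+g*g = 1" "b*b+e*e+h*h = 1" "c*c+f*f+i*i = 1" "a*b+d*e+g*h = 0" "a*c+d*f+g*i = 0" "b*c+e*f+h*i = 0"
proof -
  have "cross3 (column k R) (column l R) = R *v cross3 (axis k 1) (axis l 1)" for k l
    using cross_rotation_matrix[OF assms(1)] by (simp flip: matrix_vector_mult_basis)
  then have "cross3 (column 1 R) (column 2 R) = column 3 R" "cross3 (column 2 R) (column 3 R) = column 1 R"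
    "cross3 (column 3 R) (column 1 R) = column 2 R"
    by (simp_all add: cross_basis matrix_vector_mult_basis)
  then show "c = d*h - e*g" "f = b*g - a*h" "i = a*e - b*d"
    "a = e*i - f*h" "d = c*h - b*i" "g = b*f - c*e"
    "b = f*g - d*i" "e = a*i - c*g" "h = c*d - a*f"
    unfolding a_def b_def c_def d_def e_def f_def g_def h_def i_def
    by (simp_all add: cross3_def vec_eq_iff forall_3 column_def) (simp_all add: algebra_simps)
  have "\<forall>k l. (R ** transpose R)$k$l = mat 1 $k$l" "\<forall>k l. (transpose R ** R)$k$l = mat 1 $k$l"
    using assms(1) by (auto simp: rotation_matrix_def orthogonal_matrix_def)
  then show "a*a+b*b+c*c = 1" "d*d+e*e+f*f = 1" "g*g+h*h+i*i = 1" "a*d+b*e+c*f = 0" "a*g+b*h+c*i = 0" "d*g+e*h+f*i = 0"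
    "a*a+d*d+g*g = 1" "b*b+e*e+h*h = 1" "c*c+f*f+i*i = 1" "a*b+d*e+g*h = 0" "a*c+d*f+g*i = 0" "b*c+e*f+h*i = 0"
    by (simp_all add: forall_3 transpose_def matrix_matrix_mult_def sum_3 mat_def a_def b_def c_def d_def e_def f_def g_def h_def i_def algebra_simps)
qed

text \<open>Shepperd's formula: for a rotation \<open>R\<close> with \<open>t = 1 + trace R\<close>, the quaternion
  \<open>(t, R\<^sub>3\<^sub>2 - R\<^sub>2\<^sub>3, R\<^sub>1\<^sub>3 - R\<^sub>3\<^sub>1, R\<^sub>2\<^sub>1 - R\<^sub>1\<^sub>2)\<close> has squared norm \<open>4t\<close> and
  rotation matrix \<open>4t R\<close>.\<close>

lemma shepperd_identities:
  fixes a b c d e f g h i :: real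
  assumes "c = d*h - e*g" "f = b*g - a*h" "i = a*e - b*d"
    "a = e*i - f*h" "d = c*h - b*i" "g = b*f - c*e"
    "b = f*g - d*i" "e = a*i - c*g" "h = c*d - a*f"
    "a*a+b*b+c*c = 1" "d*d+e*e+f*f = 1" "g*g+h*h+i*i = 1" "a*d+b*e+c*f = 0" "a*g+b*h+c*i = 0" "d*g+e*h+f*i = 0"
    "a*a+d*d+g*g = 1" "b*b+e*e+h*h = 1" "c*c+f*f+i*i = 1" "a*b+d*e+g*h = 0" "a*c+d*f+g*i = 0" "b*c+e*f+h*i = 0"
  defines "t \<equiv> 1 + a + e + i"
  defines "x \<equiv> h - f" and "y \<equiv> c - g" and "z \<equiv> d - b"
  shows "t*t + x*x + y*y + z*z = 4*t"
    "t*t + x*x - y*y - z*z = 4*t*a" "2*(x*y - t*z) = 4*t*b" "2*(x*z + t*y) = 4*t*c"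
    "2*(x*y + t*z) = 4*t*d" "t*t - x*x + y*y - z*z = 4*t*e" "2*(y*z - t*x) = 4*t*f"
    "2*(x*z - t*y) = 4*t*g" "2*(y*z + t*x) = 4*t*h" "t*t - x*x - y*y + z*z = 4*t*i"
  unfolding t_def x_def y_def z_def using assms(1-21) by algebra+

lemma quat_rot_onto_positive_trace:
  fixes R :: mat3
  assumes R: "rotation_matrix R" and pos: "0 < 1 + trace R"
  obtains q where "norm q = 1" "quat_rot q = R"
proof -
  define t where "t = 1 + trace R"
  define u where "u = (t, R$3$2 - R$2$3, R$1$3 - R$3$1, R$2$1 - R$1$2)"
  note H = shepperd_identities[OF rotation_matrix_entry_identities[OF R]]
  have t: "t = 1 + R$1$1 + R$2$2 + R$3$3" "0 < t"
    using pos by (simp_all add: t_def trace_def sum_3 add.assoc)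
  have u: "quat_rot u = (4 * t) *\<^sub>R R"
    using H(2-10) by (simp add: u_def t(1) vec_eq_iff forall_3 algebra_simps)
  have nu: "(norm u)\<^sup>2 = 4 * t"
    using H(1) by (simp add: u_def t(1) power2_norm_quat)
  show thesis
  proof
    have "norm u = 2 * sqrt t"
      using nu t(2) by (metis mult.commute norm_ge_zero real_sqrt_mult real_sqrt_four real_sqrt_unique)
    then show "norm ((1 / (2 * sqrt t)) *\<^sub>R u) = 1"
      using t(2) by simp
    show "quat_rot ((1 / (2 * sqrt t)) *\<^sub>R u) = R"
      using t(2) by (simp add: quat_rot_scaleR u)
  qed
qed

section \<open>Signed permutation matrices\<close>

lemma signed_perm_matrixE:
  assumes "signed_perm_matrix P"
  obtains p s where "p permutes UNIV" "\<And>i. s i = 1 \<or> s i = -1"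
    "\<And>i j. P$i$j = (if j = p i then s i else 0)"
proof -
  obtain p s where "p permutes UNIV" "\<forall>i. s i = 1 \<or> s i = -1" "P = (\<chi> i j. if j = p i then s i else 0)"
    using assms unfolding signed_perm_matrix_def by blast
  then show thesis using that[of p s] by simp
qed

lemma signed_perm_matrix_diagonal:
  assumes "\<And>i. s i = 1 \<or> s i = -1"
  shows "signed_perm_matrix (\<chi> i j. if i = j then s i else 0)"
  unfolding signed_perm_matrix_def using assms
  by (intro exI[of _ id] exI[of _ s]) (auto simp: permutes_id vec_eq_iff)

lemma orthogonal_matrix_signed_perm:
  assumes "signed_perm_matrix P"
  shows "orthogonal_matrix P"
proof -
  obtain p s where p: "p permutes UNIV" and s: "\<And>i. s i = 1 \<or> s i = -1"
    and P: "\<And>i j. P$i$j = (if j = p i then s i else 0)"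
    using signed_perm_matrixE[OF assms] by blast
  have "(\<Sum>k\<in>UNIV. P$i$k * P$j$k) = (if i = j then 1 else 0)" for i j
  proof -
    have "(\<Sum>k\<in>UNIV. P$i$k * P$j$k) = (\<Sum>k\<in>UNIV. if k = p i then (if p i = p j then s i * s j else 0) else 0)"
      by (rule sum.cong) (auto simp: P)
    also have "\<dots> = (if i = j then 1 else 0)"
      using s[of i] permutes_inj[OF p] by (auto simp: inj_eq)
    finally show ?thesis .
  qed
  then have "P ** transpose P = mat 1"
    by (simp add: matrix_matrix_mult_def transpose_def mat_def vec_eq_iff)
  then show ?thesis
    using matrix_left_right_inverse by (auto simp: orthogonal_matrix_def)
qed

lemma signed_perm_matrix_entry:
  assumes "signed_perm_matrix P"
  shows "P$i$j = 1 \<or> P$i$j = 0 \<or> P$i$j = -1"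
proof -
  obtain p s where "\<And>i. s i = 1 \<or> s i = -1" "\<And>i j. P$i$j = (if j = p i then s i else 0)"
    using signed_perm_matrixE[OF assms] by metis
  then show ?thesis
    by (metis (full_types))
qed

lemma orthogonal_matrix_sum_squares:
  fixes A :: "real^'n^'n"
  assumes "orthogonal_matrix A"
  shows "(\<Sum>j\<in>UNIV. (A$k$j)\<^sup>2) = 1" and "(\<Sum>j\<in>UNIV. (A$j$k)\<^sup>2) = 1"
proof -
  have "(A ** transpose A)$k$k = 1" "(transpose A ** A)$k$k = 1"
    using assms by (simp_all add: orthogonal_matrix_def mat_def)
  then show "(\<Sum>j\<in>UNIV. (A$k$j)\<^sup>2) = 1" "(\<Sum>j\<in>UNIV. (A$j$k)\<^sup>2) = 1"
    by (simp_all add: matrix_matrix_mult_def transpose_def power2_eq_square)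
qed

lemma signed_perm_matrix_if_orthogonal_entries:
  fixes A :: mat3
  assumes orth: "orthogonal_matrix A" and entries: "\<And>k j. A$k$j = 1 \<or> A$k$j = 0 \<or> A$k$j = -1"
  shows "signed_perm_matrix A"
proof -
  note rows = orthogonal_matrix_sum_squares(1)[OF orth] and cols = orthogonal_matrix_sum_squares(2)[OF orth]
  have unit: "(A$k$j)\<^sup>2 = (if A$k$j = 0 then 0 else 1)" for k j
    using entries[of k j] by auto
  have row_card: "card {j. A$k$j \<noteq> 0} = 1" for k
    using rows[of k] by (simp add: unit sum.If_cases Collect_neg_eq)
  have col_card: "card {k. A$k$j \<noteq> 0} = 1" for j
    using cols[of j] by (simp add: unit sum.If_cases Collect_neg_eq)
  define p where "p k = (THE j. A$k$j \<noteq> 0)" for k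
  have row_unique: "A$k$j \<noteq> 0 \<longleftrightarrow> j = p k" for k j
  proof -
    obtain j0 where "{j. A$k$j \<noteq> 0} = {j0}"
      using row_card[of k] card_1_singletonE by blast
    then have "\<forall>j. A$k$j \<noteq> 0 \<longleftrightarrow> j = j0"
      by (auto simp: set_eq_iff)
    then show ?thesis
      by (simp add: p_def)
  qed
  have "inj p"
  proof (rule injI)
    fix k k' assume "p k = p k'"
    then have "{k, k'} \<subseteq> {l. A$l$(p k) \<noteq> 0}"
      using row_unique by auto
    moreover obtain l where "{l. A$l$(p k) \<noteq> 0} = {l}"
      using col_card[of "p k"] card_1_singletonE by blast
    ultimately show "k = k'"
      by auto
  qed
  then have "p permutes UNIV"
    by (intro bij_imp_permutes) (auto simp: bij_def finite_UNIV_inj_surj)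
  moreover have "A$k$(p k) = 1 \<or> A$k$(p k) = -1" for k
    using entries[of k "p k"] row_unique[of k "p k"] by auto
  moreover have "A = (\<chi> i j. if j = p i then A$i$(p i) else 0)"
    using row_unique by (simp add: vec_eq_iff) metis
  ultimately show ?thesis
    unfolding signed_perm_matrix_def by (intro exI[of _ p] exI[of _ "\<lambda>i. A$i$(p i)"]) simp
qed

lemma in_frame_of: "R \<in> frame_of R"
proof -
  have "signed_perm_matrix (mat 1)"
    using signed_perm_matrix_diagonal[of "\<lambda>_. 1"] by (simp add: mat_def)
  then show ?thesis
    unfolding frame_of_def by (metis (mono_tags, lifting) matrix_mul_rid mem_Collect_eq)
qed

lemma rotation_matrix_mult_sign_diagonal:
  fixes R :: mat3 and s :: "3 \<Rightarrow> real"
  assumes R: "orthogonal_matrix R" and s: "\<And>i. s i = 1 \<or> s i = -1" "s 1 * s 2 * s 3 = det R"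
  defines "D \<equiv> \<chi> i j. if i = j then s i else 0"
  shows "signed_perm_matrix D" "rotation_matrix (R ** D)"
    and "trace (R ** D) = s 1 * R$1$1 + s 2 * R$2$2 + s 3 * R$3$3"
proof -
  show D: "signed_perm_matrix D"
    unfolding D_def using s(1) by (rule signed_perm_matrix_diagonal)
  have "det D = det R"
    using s(2) by (simp add: D_def det_3)
  moreover have "det R * det R = 1"
    using det_orthogonal_matrix[OF R] by auto
  ultimately show "rotation_matrix (R ** D)"
    using R orthogonal_matrix_signed_perm[OF D] by (simp add: rotation_matrix_def det_mul orthogonal_matrix_mul)
  show "trace (R ** D) = s 1 * R$1$1 + s 2 * R$2$2 + s 3 * R$3$3"
    by (simp add: trace_def matrix_matrix_mult_def D_def sum_3 algebra_simps)
qed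

text \<open>Shepperd's formula needs \<open>1 + trace R > 0\<close>. Changing the signs of two columns, and of all
  three when \<open>det R = -1\<close>, gives four traces that sum to zero, so one of them exceeds \<open>-1\<close>.\<close>

lemma frame_rotation_with_positive_trace:
  fixes R :: mat3
  assumes R: "orthogonal_matrix R"
  obtains P where "signed_perm_matrix P" "rotation_matrix (R ** P)" "0 < 1 + trace (R ** P)"
proof -
  note result = that
  define \<sigma> where "\<sigma> = det R"
  have \<sigma>: "\<sigma> = 1 \<or> \<sigma> = -1"
    using det_orthogonal_matrix[OF R] by (simp add: \<sigma>_def)
  have sign_choice: thesis if s: "\<And>i. s i = 1 \<or> s i = -1" "s 1 * s 2 * s 3 = \<sigma>"
    and pos: "0 < 1 + s 1 * R$1$1 + s 2 * R$2$2 + s 3 * R$3$3" for s :: "3 \<Rightarrow> real"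
    using rotation_matrix_mult_sign_diagonal[OF R s(1) s(2)[unfolded \<sigma>_def]] pos
    by (intro result[of "\<chi> i j. if i = j then s i else 0"]) (simp_all add: add.assoc)
  have "(1 + \<sigma> * (R$1$1 + R$2$2 + R$3$3)) + (1 + \<sigma> * (R$1$1 - R$2$2 - R$3$3))
      + (1 + \<sigma> * (- R$1$1 + R$2$2 - R$3$3)) + (1 + \<sigma> * (- R$1$1 - R$2$2 + R$3$3)) = 4"
    by (simp add: algebra_simps)
  then consider "0 < 1 + \<sigma> * (R$1$1 + R$2$2 + R$3$3)" | "0 < 1 + \<sigma> * (R$1$1 - R$2$2 - R$3$3)"
    | "0 < 1 + \<sigma> * (- R$1$1 + R$2$2 - R$3$3)" | "0 < 1 + \<sigma> * (- R$1$1 - R$2$2 + R$3$3)"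
    by linarith
  then show thesis
  proof cases
    case 1 then show thesis
      using \<sigma> by (intro sign_choice[of "\<lambda>_. \<sigma>"]) (auto simp: distrib_left)
  next
    case 2 then show thesis
      using \<sigma> by (intro sign_choice[of "\<lambda>i. if i = 1 then \<sigma> else - \<sigma>"]) (auto simp: right_diff_distrib)
  next
    case 3 then show thesis
      using \<sigma> by (intro sign_choice[of "\<lambda>i. if i = 2 then \<sigma> else - \<sigma>"])
        (auto simp: right_diff_distrib distrib_left)
  next
    case 4 then show thesis
      using \<sigma> by (intro sign_choice[of "\<lambda>i. if i = 3 then \<sigma> else - \<sigma>"])
        (auto simp: right_diff_distrib distrib_left)
  qed
qed

section \<open>The frame tensor\<close>

text \<open>The columns of \<open>R\<close> enter only through \<open>c \<otimes> c \<otimes> c \<otimes> c\<close>, which forgets their order and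
  signs; by \<open>frame_tensor_eq_iff\<close> below it forgets nothing else.\<close>

definition frame_tensor :: "mat3 \<Rightarrow> real^3^3^3^3" where
  "frame_tensor R = (\<chi> a b c d. \<Sum>i\<in>UNIV. R$a$i * R$b$i * R$c$i * R$d$i)"

definition frame_quartic :: "mat3 \<Rightarrow> real^3 \<Rightarrow> real" where
  "frame_quartic R v = (\<Sum>i\<in>UNIV. ((transpose R *v v)$i) ^ 4)"

lemma frame_quartic_eq_tensor:
  "frame_quartic R v = (\<Sum>a\<in>UNIV. \<Sum>b\<in>UNIV. \<Sum>c\<in>UNIV. \<Sum>d\<in>UNIV.
      frame_tensor R $a$b$c$d * v$a * v$b * v$c * v$d)"
  unfolding frame_quartic_def frame_tensor_def
  by (simp add: matrix_vector_mult_def transpose_def sum_3 algebra_simps power4_eq_xxxx)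

lemma frame_quartic_mult: "frame_quartic (R ** A) v = frame_quartic A (transpose R *v v)"
  by (simp only: frame_quartic_def matrix_transpose_mul matrix_vector_mul_assoc)

lemma frame_quartic_axis: "frame_quartic A (axis k 1) = (\<Sum>j\<in>UNIV. (A$k$j) ^ 4)"
  by (simp add: frame_quartic_def matrix_vector_mult_basis column_def transpose_def)

lemma frame_tensor_signed_perm:
  assumes "signed_perm_matrix P"
  shows "frame_tensor (R ** P) = frame_tensor R"
proof -
  obtain p s where p: "p permutes UNIV" and s: "\<And>i. s i = 1 \<or> s i = -1"
    and P: "\<And>i j. P$i$j = (if j = p i then s i else 0)"
    using signed_perm_matrixE[OF assms] by blast
  define q where "q = inv p"
  have q: "q permutes UNIV"
    using p permutes_inv q_def by blast
  have pq: "j = p k \<longleftrightarrow> k = q j" for j k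
    using permutes_inverses[OF p] unfolding q_def by metis
  have RP: "(R ** P)$a$j = R$a$(q j) * s (q j)" for a j
  proof -
    have "(R ** P)$a$j = (\<Sum>k\<in>UNIV. R$a$k * (if j = p k then s k else 0))"
      by (simp add: matrix_matrix_mult_def P)
    also have "\<dots> = (\<Sum>k\<in>UNIV. if k = q j then R$a$k * s k else 0)"
      by (rule sum.cong) (auto simp: pq)
    finally show ?thesis by simp
  qed
  have "(R ** P)$a$j * (R ** P)$b$j * (R ** P)$c$j * (R ** P)$d$j
      = R$a$(q j) * R$b$(q j) * R$c$(q j) * R$d$(q j)" for a b c d j
    using s[of "q j"] by (auto simp: RP)
  then have "(\<Sum>j\<in>UNIV. (R ** P)$a$j * (R ** P)$b$j * (R ** P)$c$j * (R ** P)$d$j)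
      = (\<Sum>j\<in>UNIV. R$a$j * R$b$j * R$c$j * R$d$j)" for a b c d
    using sum.permute[OF q, of "\<lambda>j. R$a$j * R$b$j * R$c$j * R$d$j"] by (simp add: o_def)
  then show ?thesis
    unfolding frame_tensor_def by (simp add: vec_eq_iff)
qed

lemma zero_one_if_sum_eq_sum_squares:
  fixes t :: "'a::finite \<Rightarrow> real"
  assumes nonneg: "\<And>j. 0 \<le> t j" and sum1: "sum t UNIV = 1" and sq: "(\<Sum>j\<in>UNIV. (t j)\<^sup>2) = 1"
  shows "t j = 0 \<or> t j = 1"
proof -
  have le1: "t j \<le> 1" for j
    using member_le_sum[of j UNIV t] nonneg sum1 by simp
  have "(\<Sum>j\<in>UNIV. t j * (1 - t j)) = sum t UNIV - (\<Sum>j\<in>UNIV. (t j)\<^sup>2)"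
    by (simp add: algebra_simps power2_eq_square sum_subtractf)
  also have "\<dots> = 0"
    using sum1 sq by simp
  finally have "\<forall>j\<in>UNIV. t j * (1 - t j) = 0"
    using sum_nonneg_eq_0_iff[of UNIV "\<lambda>j. t j * (1 - t j)"] nonneg le1 by simp
  then show ?thesis by simp
qed

lemma orthogonal_matrix_entry_if_row_fourth_powers:
  fixes A :: mat3
  assumes orth: "orthogonal_matrix A" and quartic: "(\<Sum>j\<in>UNIV. (A$k$j) ^ 4) = 1"
  shows "A$k$j = 1 \<or> A$k$j = 0 \<or> A$k$j = -1"
proof -
  have "(A$k$j)\<^sup>2 = 0 \<or> (A$k$j)\<^sup>2 = 1"
    using zero_one_if_sum_eq_sum_squares[of "\<lambda>j. (A$k$j)\<^sup>2"] orthogonal_matrix_sum_squares(1)[OF orth]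
      quartic by (simp add: power_mult[symmetric])
  then show ?thesis
    by (auto simp: power2_eq_1_iff)
qed

lemma frame_of_subset_if_frame_tensor_eq:
  assumes R: "orthogonal_matrix R" and R': "orthogonal_matrix R'"
    and eq: "frame_tensor R = frame_tensor R'"
  shows "frame_of R \<subseteq> frame_of R'"
proof
  fix X assume "X \<in> frame_of R"
  then obtain P where P: "signed_perm_matrix P" and X: "X = R ** P"
    by (auto simp: frame_of_def)
  define A where "A = transpose R' ** X"
  have R'A: "R' ** A = X"
    using R' by (simp add: A_def matrix_mul_assoc orthogonal_matrix_def)
  have R'_cancel: "transpose R' *v (R' *v v) = v" for v
    using R' by (simp add: matrix_vector_mul_assoc orthogonal_matrix_def)
  have quartic_eq: "frame_quartic R v = frame_quartic R' v" for v
    using eq by (simp add: frame_quartic_eq_tensor)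
  have quartic: "(\<Sum>j\<in>UNIV. (A$k$j) ^ 4) = 1" for k
  proof -
    have "(\<Sum>j\<in>UNIV. (A$k$j) ^ 4) = frame_quartic (R' ** A) (R' *v axis k 1)"
      by (simp only: frame_quartic_axis frame_quartic_mult R'_cancel)
    also have "\<dots> = frame_quartic R (R' *v axis k 1)"
      by (simp add: R'A X frame_quartic_eq_tensor frame_tensor_signed_perm[OF P])
    also have "\<dots> = frame_quartic (R' ** mat 1) (R' *v axis k 1)"
      by (simp add: quartic_eq)
    also have "\<dots> = 1"
      by (simp only: frame_quartic_mult R'_cancel frame_quartic_axis)
        (simp add: mat_def if_distrib[of "\<lambda>x::real. x ^ 4"] cong: if_cong)
    finally show ?thesis .
  qed
  have A: "orthogonal_matrix A"
    unfolding A_def X using R R' orthogonal_matrix_signed_perm[OF P]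
    by (simp add: orthogonal_matrix_mul orthogonal_matrix_transpose)
  then have "signed_perm_matrix A"
    using orthogonal_matrix_entry_if_row_fourth_powers[OF A quartic]
    by (rule signed_perm_matrix_if_orthogonal_entries)
  then show "X \<in> frame_of R'"
    unfolding frame_of_def using R'A by blast
qed

lemma frame_tensor_eq_iff:
  assumes "orthogonal_matrix R" and "orthogonal_matrix R'"
  shows "frame_tensor R = frame_tensor R' \<longleftrightarrow> frame_of R = frame_of R'"
proof
  assume "frame_tensor R = frame_tensor R'"
  then show "frame_of R = frame_of R'"
    using frame_of_subset_if_frame_tensor_eq assms by (metis subset_antisym)
next
  assume "frame_of R = frame_of R'"
  then obtain P where "signed_perm_matrix P" "R' = R ** P"
    using in_frame_of[of R'] by (auto simp: frame_of_def)
  then show "frame_tensor R = frame_tensor R'"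
    by (simp add: frame_tensor_signed_perm)
qed

section \<open>The frame space as a compact set of tensors\<close>

lemma openin_frame_top:
  "openin frame_top U \<longleftrightarrow> U \<subseteq> frames3 \<and> openin (top_of_set O3_mats) {R \<in> O3_mats. frame_of R \<in> U}"
proof -
  have "istopology (\<lambda>U. U \<subseteq> frames3 \<and> openin (top_of_set O3_mats) {R \<in> O3_mats. frame_of R \<in> U})"
    unfolding istopology_def
  proof (rule conjI; intro allI impI)
    fix U V :: "mat3 set set"
    assume "U \<subseteq> frames3 \<and> openin (top_of_set O3_mats) {R \<in> O3_mats. frame_of R \<in> U}"
      and "V \<subseteq> frames3 \<and> openin (top_of_set O3_mats) {R \<in> O3_mats. frame_of R \<in> V}"
    moreover have "{R \<in> O3_mats. frame_of R \<in> U \<inter> V}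
        = {R \<in> O3_mats. frame_of R \<in> U} \<inter> {R \<in> O3_mats. frame_of R \<in> V}"
      by blast
    ultimately show "U \<inter> V \<subseteq> frames3 \<and> openin (top_of_set O3_mats) {R \<in> O3_mats. frame_of R \<in> U \<inter> V}"
      by auto
  next
    fix K :: "mat3 set set set"
    assume "\<forall>U\<in>K. U \<subseteq> frames3 \<and> openin (top_of_set O3_mats) {R \<in> O3_mats. frame_of R \<in> U}"
    moreover have "{R \<in> O3_mats. frame_of R \<in> \<Union>K} = (\<Union>U\<in>K. {R \<in> O3_mats. frame_of R \<in> U})"
      by blast
    ultimately show "\<Union>K \<subseteq> frames3 \<and> openin (top_of_set O3_mats) {R \<in> O3_mats. frame_of R \<in> \<Union>K}"
      by auto
  qed
  then show ?thesis
    unfolding frame_top_def by (simp add: topology_inverse')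
qed

lemma topspace_frame_top: "topspace frame_top = frames3"
proof -
  have "{R \<in> O3_mats. frame_of R \<in> frames3} = O3_mats"
    by (auto simp: frames3_def)
  then have "openin frame_top frames3"
    unfolding openin_frame_top by simp
  then show ?thesis
    unfolding topspace_def using openin_frame_top by blast
qed

lemma compact_O3_mats: "compact O3_mats"
proof -
  have "norm R = sqrt 3" if "R \<in> O3_mats" for R
  proof -
    have "norm (R $ i) = 1" for i
      using that orthogonal_matrix_orthonormal_rows[of R] by (simp add: O3_mats_def row_def vec_lambda_eta)
    then show ?thesis
      by (simp add: norm_vec_def L2_set_def)
  qed
  then have "bounded O3_mats"
    by (metis bounded_iff order_refl)
  moreover have "closed {R::mat3. transpose R ** R = mat 1}"
  proof (rule closed_Collect_eq)
    have "continuous_on UNIV (\<lambda>R::mat3. \<chi> i j. \<Sum>k\<in>UNIV. R$k$i * R$k$j)"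
      by (intro continuous_on_vec_lambda continuous_on_sum continuous_on_mult continuous_on_component continuous_on_id)
    then show "continuous_on UNIV (\<lambda>R::mat3. transpose R ** R)"
      by (simp add: matrix_matrix_mult_def transpose_def)
  qed simp
  moreover have "O3_mats = {R. transpose R ** R = mat 1}"
    using matrix_left_right_inverse by (auto simp: O3_mats_def orthogonal_matrix_def)
  ultimately show ?thesis
    by (simp add: compact_eq_bounded_closed)
qed

lemma continuous_on_frame_tensor: "continuous_on A frame_tensor"
  unfolding frame_tensor_def[abs_def]
  by (intro continuous_on_vec_lambda continuous_on_sum continuous_on_mult continuous_on_component continuous_on_id)

definition frame_tensors :: "(real^3^3^3^3) set" where
  "frame_tensors = frame_tensor ` O3_mats"

definition frame_code :: "mat3 set \<Rightarrow> real^3^3^3^3" where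
  "frame_code F = frame_tensor (SOME R. R \<in> F)"

definition frame_decode :: "real^3^3^3^3 \<Rightarrow> mat3 set" where
  "frame_decode x = frame_of (SOME R. R \<in> O3_mats \<and> frame_tensor R = x)"

lemma frame_code_frame_of: "frame_code (frame_of R) = frame_tensor R"
proof -
  obtain P where "signed_perm_matrix P" "(SOME X. X \<in> frame_of R) = R ** P"
    using someI[of "\<lambda>X. X \<in> frame_of R", OF in_frame_of] by (auto simp: frame_of_def)
  then show ?thesis
    unfolding frame_code_def by (simp add: frame_tensor_signed_perm)
qed

lemma frame_decode_frame_tensor:
  assumes "R \<in> O3_mats"
  shows "frame_decode (frame_tensor R) = frame_of R"
proof -
  define R' where "R' = (SOME R'. R' \<in> O3_mats \<and> frame_tensor R' = frame_tensor R)"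
  have "R' \<in> O3_mats \<and> frame_tensor R' = frame_tensor R"
    unfolding R'_def by (rule someI[of _ R]) (simp add: assms)
  then have "frame_of R' = frame_of R"
    using frame_tensor_eq_iff[of R' R] assms by (simp add: O3_mats_def)
  then show ?thesis
    unfolding frame_decode_def R'_def[symmetric] .
qed

lemma frame_code_in_frame_tensors: "F \<in> frames3 \<Longrightarrow> frame_code F \<in> frame_tensors"
  by (auto simp: frames3_def frame_tensors_def frame_code_frame_of)

lemma frame_decode_code: "F \<in> frames3 \<Longrightarrow> frame_decode (frame_code F) = F"
  by (auto simp: frames3_def frame_code_frame_of frame_decode_frame_tensor)

lemma continuous_map_frame_code: "continuous_map frame_top euclidean frame_code"
  unfolding continuous_map_def
proof (intro conjI allI impI)
  fix V :: "(real^3^3^3^3) set"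
  assume "openin euclidean V"
  then have "openin (top_of_set O3_mats) (O3_mats \<inter> frame_tensor -` V)"
    by (simp add: continuous_openin_preimage_gen continuous_on_frame_tensor)
  moreover have "{R \<in> O3_mats. frame_of R \<in> {F \<in> topspace frame_top. frame_code F \<in> V}}
      = O3_mats \<inter> frame_tensor -` V"
    by (auto simp: topspace_frame_top frames3_def frame_code_frame_of)
  ultimately show "openin frame_top {F \<in> topspace frame_top. frame_code F \<in> V}"
    unfolding openin_frame_top by (simp add: topspace_frame_top)
qed simp

lemma continuous_map_frame_decode: "continuous_map (top_of_set frame_tensors) frame_top frame_decode"
  unfolding continuous_map_def
proof (intro conjI allI impI)
  show "frame_decode \<in> topspace (top_of_set frame_tensors) \<rightarrow> topspace frame_top"
    by (auto simp: frame_tensors_def topspace_frame_top frames3_def frame_decode_frame_tensor)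
  fix U assume "openin frame_top U"
  then have "openin (top_of_set O3_mats) {R \<in> O3_mats. frame_of R \<in> U}"
    by (simp add: openin_frame_top)
  moreover have "{R \<in> O3_mats. frame_of R \<in> U}
      = O3_mats \<inter> frame_tensor -` {x \<in> topspace (top_of_set frame_tensors). frame_decode x \<in> U}"
    by (auto simp: frame_tensors_def frame_decode_frame_tensor) (metis frame_decode_frame_tensor)
  ultimately show "openin (top_of_set frame_tensors) {x \<in> topspace (top_of_set frame_tensors). frame_decode x \<in> U}"
    using Abstract_Topology_2.continuous_imp_quotient_map[OF continuous_on_frame_tensor
        frame_tensors_def[symmetric] compact_O3_mats, of "{x \<in> frame_tensors. frame_decode x \<in> U}"]
    by auto
qed

section \<open>Coverings with isometric fibres\<close>

locale isometric_fibration =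
  fixes C :: "'a::metric_space set" and p :: "'a \<Rightarrow> 'b::metric_space" and d :: real
  assumes compact_domain: "compact C"
    and continuous: "continuous_on C p"
    and separation_pos: "0 < d"
    and fibre_separated: "\<And>x y. \<lbrakk>x \<in> C; y \<in> C; p x = p y; x \<noteq> y\<rbrakk> \<Longrightarrow> d \<le> dist x y"
    and fibre_isometry: "\<And>x y. \<lbrakk>x \<in> C; y \<in> C; p x = p y\<rbrakk> \<Longrightarrow>
      \<exists>h. h ` C \<subseteq> C \<and> (\<forall>z\<in>C. p (h z) = p z) \<and> (\<forall>z\<in>C. \<forall>z'\<in>C. dist (h z) (h z') = dist z z') \<and> h x = y"
begin

lemma transport:
  assumes "x \<in> C" "y \<in> C" "p x = p y" "z \<in> C" "dist x z < e"
  obtains z' where "z' \<in> C" "dist y z' < e" "p z' = p z"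
proof -
  obtain h where h: "h ` C \<subseteq> C" "\<forall>z\<in>C. p (h z) = p z"
    "\<forall>z\<in>C. \<forall>z'\<in>C. dist (h z) (h z') = dist z z'" "h x = y"
    using fibre_isometry[OF assms(1-3)] by blast
  then show thesis
    using that[of "h z"] assms by (auto simp: image_subset_iff)
qed

lemma openin_saturation:
  assumes V: "openin (top_of_set C) V"
  shows "openin (top_of_set C) (C \<inter> p -` p ` V)"
  unfolding openin_euclidean_subtopology_iff
proof (intro conjI ballI)
  fix z assume "z \<in> C \<inter> p -` p ` V"
  then obtain v where z: "z \<in> C" and v: "v \<in> V" and pz: "p z = p v"
    by auto
  obtain e where e: "e > 0" "\<And>x'. x' \<in> C \<Longrightarrow> dist x' v < e \<Longrightarrow> x' \<in> V"
    using V v unfolding openin_euclidean_subtopology_iff by blast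
  have vC: "v \<in> C"
    using V v openin_imp_subset by fastforce
  have "x' \<in> p -` p ` V" if x': "x' \<in> C" "dist x' z < e" for x'
  proof -
    obtain z' where z': "z' \<in> C" "dist v z' < e" "p z' = p x'"
      using transport[OF z vC pz x'(1), of e] x'(2) by (auto simp: dist_commute)
    then have "z' \<in> V"
      using e(2) by (simp add: dist_commute)
    then show ?thesis
      using z'(3) by (metis image_eqI vimageI)
  qed
  then show "\<exists>e>0. \<forall>x'\<in>C. dist x' z < e \<longrightarrow> x' \<in> C \<inter> p -` p ` V"
    using e(1) by blast
qed auto

lemma openin_image:
  assumes "openin (top_of_set C) V"
  shows "openin (top_of_set (p ` C)) (p ` V)"
  using Abstract_Topology_2.continuous_imp_quotient_map[OF continuous refl compact_domain, of "p ` V"]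
    openin_saturation[OF assms] openin_imp_subset[OF assms] by auto

definition sheet :: "'a \<Rightarrow> 'a set" where
  "sheet x = C \<inter> ball x (d/2)"

lemma openin_sheet: "openin (top_of_set C) (sheet x)"
  unfolding sheet_def by (simp add: openin_open_Int)

lemma image_sheet_eq:
  assumes "x \<in> C" "x' \<in> C" "p x = p x'"
  shows "p ` sheet x = p ` sheet x'"
proof -
  have "p ` sheet x \<subseteq> p ` sheet x'" if xx': "x \<in> C" "x' \<in> C" "p x = p x'" for x x'
  proof
    fix w assume "w \<in> p ` sheet x"
    then obtain z where "z \<in> C" "dist x z < d/2" "w = p z"
      by (auto simp: sheet_def)
    then obtain z' where "z' \<in> C" "dist x' z' < d/2" "p z' = w"
      using transport[OF xx'] by metis
    then show "w \<in> p ` sheet x'"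
      by (auto simp: sheet_def)
  qed
  then show ?thesis
    using assms by (metis subset_antisym)
qed

lemma inj_on_sheet: "inj_on p (sheet x)"
proof (rule inj_onI, rule ccontr)
  fix z z' assume z: "z \<in> sheet x" "z' \<in> sheet x" "p z = p z'" "z \<noteq> z'"
  then have "d \<le> dist z z'"
    using fibre_separated unfolding sheet_def by blast
  moreover have "dist z z' < d"
    using z dist_triangle_half_r[of x z d z'] unfolding sheet_def by (auto simp: dist_commute)
  ultimately show False by simp
qed

lemma disjnt_sheets:
  assumes "x \<in> C" "x' \<in> C" "p x = p x'" "x \<noteq> x'"
  shows "disjnt (sheet x) (sheet x')"
  using fibre_separated[OF assms] dist_triangle_half_l[of x _ d x'] by (auto simp: disjnt_def sheet_def)

lemma preimage_image_sheet:
  assumes c: "c \<in> C"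
  shows "C \<inter> p -` p ` sheet c = \<Union>{sheet x | x. x \<in> C \<and> p x = p c}"
proof
  show "\<Union>{sheet x | x. x \<in> C \<and> p x = p c} \<subseteq> C \<inter> p -` p ` sheet c"
    using image_sheet_eq c unfolding sheet_def by blast
  show "C \<inter> p -` p ` sheet c \<subseteq> \<Union>{sheet x | x. x \<in> C \<and> p x = p c}"
  proof
    fix z assume z: "z \<in> C \<inter> p -` p ` sheet c"
    then obtain a where a: "a \<in> C" "dist c a < d/2" "p z = p a"
      by (auto simp: sheet_def)
    then obtain x where "x \<in> C" "dist z x < d/2" "p x = p c"
      using transport[of a z c "d/2"] z c by (auto simp: dist_commute)
    then have "z \<in> sheet x" "x \<in> C" "p x = p c"
      using z unfolding sheet_def by (auto simp: dist_commute)
    then show "z \<in> \<Union>{sheet x | x. x \<in> C \<and> p x = p c}"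
      by blast
  qed
qed

lemma homeomorphism_sheet:
  obtains q where "homeomorphism (sheet x) (p ` sheet x) p q"
proof (rule homeomorphism_injective_open_map[OF _ refl inj_on_sheet])
  show "continuous_on (sheet x) p"
    using continuous by (rule continuous_on_subset) (auto simp: sheet_def)
  fix U assume U: "openin (top_of_set (sheet x)) U"
  then have "openin (top_of_set (p ` C)) (p ` U)"
    using openin_sheet openin_trans openin_image by blast
  moreover have "p ` U \<subseteq> p ` sheet x" "p ` sheet x \<subseteq> p ` C"
    using openin_imp_subset[OF U] by (auto simp: sheet_def)
  ultimately show "openin (top_of_set (p ` sheet x)) (p ` U)"
    using openin_subset_trans by blast
qed (rule that)

theorem covering_space: "covering_space C p (p ` C)"
proof (rule covering_spaceI[OF continuous refl])
  fix y assume "y \<in> p ` C"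
  then obtain c where c: "c \<in> C" "p c = y"
    by blast
  show "\<exists>T. y \<in> T \<and> openin (top_of_set (p ` C)) T \<and>
      (\<exists>U. \<Union>U = C \<inter> p -` T \<and> (\<forall>u\<in>U. openin (top_of_set C) u) \<and>
        pairwise disjnt U \<and> (\<forall>u\<in>U. \<exists>q. homeomorphism u T p q))"
  proof (intro exI conjI)
    show "y \<in> p ` sheet c"
      using c separation_pos by (auto simp: sheet_def)
    show "openin (top_of_set (p ` C)) (p ` sheet c)"
      by (rule openin_image[OF openin_sheet])
    show "\<Union>{sheet x | x. x \<in> C \<and> p x = p c} = C \<inter> p -` p ` sheet c"
      using preimage_image_sheet[OF c(1)] by simp
    show "\<forall>u\<in>{sheet x | x. x \<in> C \<and> p x = p c}. openin (top_of_set C) u"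
      using openin_sheet by blast
    show "pairwise disjnt {sheet x | x. x \<in> C \<and> p x = p c}"
      unfolding pairwise_def
    proof clarify
      fix x x' assume "x \<in> C" "p x = p c" "x' \<in> C" "p x' = p c" "sheet x \<noteq> sheet x'"
      then show "disjnt (sheet x) (sheet x')"
        using disjnt_sheets[of x x'] by auto
    qed
    show "\<forall>u\<in>{sheet x | x. x \<in> C \<and> p x = p c}. \<exists>q. homeomorphism u (p ` sheet c) p q"
    proof clarify
      fix x assume x: "x \<in> C" "p x = p c"
      obtain q where "homeomorphism (sheet x) (p ` sheet x) p q"
        by (rule homeomorphism_sheet)
      then show "\<exists>q. homeomorphism (sheet x) (p ` sheet c) p q"
        using image_sheet_eq[OF x(1) c(1) x(2)] by auto
    qed
  qed
qed

end

lemma sphere_map_extends_if_covered_by_sphere: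
  fixes \<phi> :: "'m::euclidean_space \<Rightarrow> 'b::real_normed_vector" and p :: "'a::euclidean_space \<Rightarrow> 'b"
  assumes cov: "covering_space (sphere b s) p T" and dim: "3 \<le> DIM('m)" "DIM('m) < DIM('a)"
    and cont: "continuous_on (sphere a r) \<phi>" and im: "\<phi> \<in> sphere a r \<rightarrow> T"
  obtains g where "continuous_on (cball a r) g" "g ` cball a r \<subseteq> T" "\<And>x. x \<in> sphere a r \<Longrightarrow> g x = \<phi> x"
proof -
  obtain k where k: "continuous_on (sphere a r) k" "k \<in> sphere a r \<rightarrow> sphere b s"
      "\<And>x. x \<in> sphere a r \<Longrightarrow> p (k x) = \<phi> x"
    using covering_space_lift[OF cov simply_connected_sphere[OF dim(1)] locally_path_connected_sphere cont im]
    by metis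
  obtain c where "homotopic_with_canon (\<lambda>_. True) (sphere a r) (sphere b s) k (\<lambda>_. c)"
    using inessential_spheremap_lowdim[OF dim(2) k(1,2)] by metis
  then have "homotopic_with_canon (\<lambda>_. True) (sphere a r) T (p \<circ> k) (p \<circ> (\<lambda>_. c))"
    using covering_space_imp_continuous[OF cov] covering_space_imp_surjective[OF cov]
    by (intro homotopic_with_compose_continuous_left) auto
  then have "\<exists>c. homotopic_with_canon (\<lambda>_. True) (sphere a r) T (p \<circ> k) (\<lambda>_. c)"
    by (auto simp: o_def)
  then obtain g where "continuous_on (cball a r) g" "g ` cball a r \<subseteq> T" "\<forall>x\<in>sphere a r. g x = (p \<circ> k) x"
    unfolding nullhomotopic_from_sphere_extension by blast
  then show thesis
    using that k(3) by auto
qed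

section \<open>Unit quaternions cover the frame space\<close>

definition quat_frame :: "quat \<Rightarrow> real^3^3^3^3" where
  "quat_frame q = frame_tensor (quat_rot q)"

lemma continuous_on_quat_rot: "continuous_on A quat_rot"
proof -
  let ?rot = "\<lambda>q. quat_rot (fst q, fst (snd q), fst (snd (snd q)), snd (snd (snd q)))"
  have "continuous_on A (\<lambda>q. ?rot q $ i $ j)" for i j
    unfolding quat_rot.simps using exhaust_3[of i] exhaust_3[of j]
    by (elim disjE; simp; intro continuous_intros)
  then have "continuous_on A (\<lambda>q. \<chi> i j. ?rot q $ i $ j)"
    by (intro continuous_on_vec_lambda)
  then show ?thesis
    by (simp add: vec_lambda_eta)
qed

lemma continuous_on_quat_frame: "continuous_on A quat_frame"
  unfolding quat_frame_def[abs_def]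
  using continuous_on_compose[OF continuous_on_quat_rot continuous_on_frame_tensor] by (simp add: o_def)

lemma quat_frame_sphere: "quat_frame ` sphere 0 1 = frame_tensors"
proof
  show "quat_frame ` sphere 0 1 \<subseteq> frame_tensors"
    using orthogonal_matrix_quat_rot by (auto simp: quat_frame_def frame_tensors_def O3_mats_def)
  show "frame_tensors \<subseteq> quat_frame ` sphere 0 1"
  proof
    fix x assume "x \<in> frame_tensors"
    then obtain R where R: "orthogonal_matrix R" "x = frame_tensor R"
      by (auto simp: frame_tensors_def O3_mats_def)
    obtain P where P: "signed_perm_matrix P" "rotation_matrix (R ** P)" "0 < 1 + trace (R ** P)"
      using frame_rotation_with_positive_trace[OF R(1)] .
    obtain q where q: "norm q = 1" "quat_rot q = R ** P"
      using quat_rot_onto_positive_trace[OF P(2,3)] .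
    then have "x = quat_frame q"
      using R(2) frame_tensor_signed_perm[OF P(1)] by (simp add: quat_frame_def)
    then show "x \<in> quat_frame ` sphere 0 1"
      using q(1) by simp
  qed
qed

lemma quat_frame_fibre:
  assumes x: "norm x = 1" and y: "norm y = 1" and eq: "quat_frame x = quat_frame y"
  obtains g where "norm g = 1" "signed_perm_matrix (quat_rot g)" "qmul x g = y"
proof
  have ox: "orthogonal_matrix (quat_rot x)" and oy: "orthogonal_matrix (quat_rot y)"
    using orthogonal_matrix_quat_rot x y by auto
  then have "frame_of (quat_rot x) = frame_of (quat_rot y)"
    using frame_tensor_eq_iff eq by (simp add: quat_frame_def)
  then obtain P where P: "signed_perm_matrix P" "quat_rot y = quat_rot x ** P"
    using in_frame_of[of "quat_rot y"] by (auto simp: frame_of_def)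
  have "quat_rot (qmul (qconj x) y) = transpose (quat_rot x) ** (quat_rot x ** P)"
    by (simp add: quat_rot_qmul quat_rot_qconj P(2))
  also have "\<dots> = P"
    using ox by (simp add: matrix_mul_assoc orthogonal_matrix_def)
  finally show "signed_perm_matrix (quat_rot (qmul (qconj x) y))"
    using P(1) by simp
  show "norm (qmul (qconj x) y) = 1"
    using x y by (simp add: norm_qmul norm_qconj)
  show "qmul x (qmul (qconj x) y) = y"
    by (simp flip: qmul_assoc add: qmul_qconj x)
qed

lemma signed_perm_quat_far_from_one:
  assumes g: "norm g = 1" and P: "signed_perm_matrix (quat_rot g)" and ne: "g \<noteq> (1,0,0,0)"
  shows "1/2 \<le> norm ((1,0,0,0) - g)"
proof -
  obtain w x y z where g_eq: "g = (w,x,y,z)"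
    by (cases g) auto
  have unit: "w*w + x*x + y*y + z*z = 1"
    using g power2_norm_quat[of w x y z] g_eq by simp
  have diag_entry: "quat_rot g $ i $ i \<in> {1, 0, -1}" for i
    using signed_perm_matrix_entry[OF P] by auto
  have diag: "w*w+x*x-y*y-z*z \<in> {1, 0, -1}" "w*w-x*x+y*y-z*z \<in> {1, 0, -1}"
    "w*w-x*x-y*y+z*z \<in> {1, 0, -1}"
    using diag_entry[of 1] diag_entry[of 2] diag_entry[of 3] by (simp_all add: g_eq)
  have "w \<le> 3/4"
  proof (cases "w*w+x*x-y*y-z*z = 1 \<and> w*w-x*x+y*y-z*z = 1 \<and> w*w-x*x-y*y+z*z = 1")
    case True
    then have "x*x + y*y + z*z = 0" "w*w = 1"
      using unit by linarith+
    then have "x = 0" "y = 0" "z = 0" "w = 1 \<or> w = -1"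
      by (auto simp: add_nonneg_eq_0_iff square_eq_1_iff)
    then show ?thesis
      using ne g_eq by auto
  next
    case False
    have "A \<le> 1/2"
      if "\<not> (A+B-C-D = 1 \<and> A-B+C-D = 1 \<and> A-B-C+D = 1)" "A+B-C-D \<in> {1, 0, -1}"
        "A-B+C-D \<in> {1, 0, -1}" "A-B-C+D \<in> {1, 0, -1}" "A+B+C+D = 1" "0 \<le> B" "0 \<le> C" "0 \<le> D"
      for A B C D :: real
      using that by auto
    from this[of "w*w" "x*x" "y*y" "z*z"] have "w * w \<le> 1/2"
      using False diag unit by simp
    show ?thesis
    proof (rule ccontr)
      assume "\<not> w \<le> 3/4"
      then have "3/4 * (3/4) < w * w"
        by (intro mult_strict_mono) auto
      then show False
        using \<open>w * w \<le> 1/2\<close> by simp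
    qed
  qed
  moreover have "(norm ((1,0,0,0) - g))\<^sup>2 = 2 - 2*w"
    using unit power2_norm_quat[of "1-w" "-x" "-y" "-z"] by (simp add: g_eq algebra_simps)
  ultimately have "(1/2)\<^sup>2 \<le> (norm ((1,0,0,0) - g))\<^sup>2"
    by (simp add: power2_eq_square)
  then show ?thesis
    by (rule power2_le_imp_le) simp
qed

lemma covering_space_quat_frame: "covering_space (sphere 0 1) quat_frame frame_tensors"
proof -
  have "isometric_fibration (sphere 0 1) quat_frame (1/2)"
  proof
    fix x y :: quat
    assume x: "x \<in> sphere 0 1" and y: "y \<in> sphere 0 1" and eq: "quat_frame x = quat_frame y"
    have "norm x = 1" "norm y = 1"
      using x y by auto
    then obtain g where g: "norm g = 1" "signed_perm_matrix (quat_rot g)" "qmul x g = y"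
      using quat_frame_fibre eq by blast
    have "x - y = qmul x ((1,0,0,0) - g)"
      using g(3) by (metis qmul_diff_right qmul_one(2))
    then have "dist x y = norm ((1,0,0,0) - g)"
      using x by (simp add: dist_norm norm_qmul)
    then show "x \<noteq> y \<Longrightarrow> 1/2 \<le> dist x y"
      using signed_perm_quat_far_from_one[OF g(1,2)] g(3) by fastforce
    show "\<exists>h. h ` sphere 0 1 \<subseteq> sphere 0 1 \<and> (\<forall>z\<in>sphere 0 1. quat_frame (h z) = quat_frame z) \<and>
        (\<forall>z\<in>sphere 0 1. \<forall>z'\<in>sphere 0 1. dist (h z) (h z') = dist z z') \<and> h x = y"
    proof (intro exI[of _ "\<lambda>z. qmul z g"] conjI ballI)
      show "(\<lambda>z. qmul z g) ` sphere 0 1 \<subseteq> sphere 0 1"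
        using g(1) by (auto simp: norm_qmul)
      show "quat_frame (qmul z g) = quat_frame z" for z
        unfolding quat_frame_def quat_rot_qmul by (rule frame_tensor_signed_perm[OF g(2)])
      show "dist (qmul z g) (qmul z' g) = dist z z'" for z z'
        by (simp add: dist_norm qmul_diff_left norm_qmul g(1))
    qed (rule g(3))
  qed (simp_all add: continuous_on_quat_frame)
  then show ?thesis
    using isometric_fibration.covering_space quat_frame_sphere by fastforce
qed

section \<open>Removing isolated singularities\<close>

lemma frame_field_extends_from_sphere:
  assumes "frame_field_on (sphere a r) f"
  obtains g where "frame_field_on (cball a r) g" "\<And>x. x \<in> sphere a r \<Longrightarrow> g x = f x"
proof -
  have f: "continuous_map (top_of_set (sphere a r)) frame_top f"
    using assms by (simp add: frame_field_on_def)
  then have frames: "f x \<in> frames3" if "x \<in> sphere a r" for x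
    using continuous_map_image_subset_topspace[OF f] that by (auto simp: topspace_frame_top)
  have "continuous_on (sphere a r) (frame_code \<circ> f)"
    using continuous_map_compose[OF f continuous_map_frame_code] by simp
  moreover have "frame_code \<circ> f \<in> sphere a r \<rightarrow> frame_tensors"
    using frames frame_code_in_frame_tensors by auto
  moreover have "3 \<le> DIM(real^3)" "DIM(real^3) < DIM(quat)"
    by simp_all
  ultimately obtain G where G: "continuous_on (cball a r) G" "G ` cball a r \<subseteq> frame_tensors"
      "\<And>x. x \<in> sphere a r \<Longrightarrow> G x = (frame_code \<circ> f) x"
    using sphere_map_extends_if_covered_by_sphere[OF covering_space_quat_frame] by blast
  show thesis
  proof (rule that)
    have "continuous_map (top_of_set (cball a r)) (top_of_set frame_tensors) G"
      using G(1,2) by (simp add: continuous_map_in_subtopology image_subset_iff_funcset)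
    then show "frame_field_on (cball a r) (frame_decode \<circ> G)"
      unfolding frame_field_on_def by (rule continuous_map_compose[OF _ continuous_map_frame_decode])
    show "(frame_decode \<circ> G) x = f x" if "x \<in> sphere a r" for x
      using G(3) frames frame_decode_code that by simp
  qed
qed

lemma frame_field_patch_cball:
  assumes f: "frame_field_on A f" and g: "frame_field_on (cball s r) g"
    and agree: "\<And>x. x \<in> sphere s r \<Longrightarrow> g x = f x" and outer: "{x \<in> D. r \<le> dist s x} \<subseteq> A"
  shows "frame_field_on D (\<lambda>x. if dist s x \<le> r then g x else f x)"
  unfolding frame_field_on_def
proof (rule continuous_map_cases_le)
  show "continuous_map (top_of_set D) euclideanreal (dist s)"
    using continuous_on_dist[OF continuous_on_const continuous_on_id]
    by (simp add: continuous_map_iff_continuous)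
  show "continuous_map (subtopology (top_of_set D) {x \<in> topspace (top_of_set D). dist s x \<le> r}) frame_top g"
    using g unfolding frame_field_on_def subtopology_subtopology
    by (rule continuous_map_from_subtopology_mono) auto
  show "continuous_map (subtopology (top_of_set D) {x \<in> topspace (top_of_set D). r \<le> dist s x}) frame_top f"
    using f unfolding frame_field_on_def subtopology_subtopology
    by (rule continuous_map_from_subtopology_mono) (use outer in auto)
qed (use agree in auto)

lemma interior_of_cball_bounds:
  assumes "cball s r \<subseteq> M"
  shows "ball s r \<subseteq> top_of_set M interior_of cball s r" "top_of_set M interior_of cball s r \<subseteq> cball s r"
proof -
  have "ball s r = M \<inter> ball s r"
    using assms ball_subset_cball by blast
  then have "openin (top_of_set M) (ball s r)"
    by (metis openin_open_Int open_ball)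
  then show "ball s r \<subseteq> top_of_set M interior_of cball s r"
    by (meson ball_subset_cball interior_of_maximal)
  show "top_of_set M interior_of cball s r \<subseteq> cball s r"
    by (rule interior_of_subset)
qed

lemma redundant_if_sphere_avoids_singularities:
  assumes f: "frame_field_on (M - S) f" and s: "s \<in> S" and r: "0 < r"
    and cball: "cball s r \<subseteq> interior M" and sphere: "sphere s r \<inter> S = {}"
  shows "redundant M S f {s}"
proof -
  define I where "I = top_of_set M interior_of cball s r"
  have cball_M: "cball s r \<subseteq> M"
    using cball interior_subset by blast
  have sphere_reg: "sphere s r \<subseteq> M - S"
    using sphere cball_M sphere_cball by blast
  have ball_I: "ball s r \<subseteq> I" and I_cball: "I \<subseteq> cball s r"
    unfolding I_def using interior_of_cball_bounds[OF cball_M] by auto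
  have outer: "{x \<in> (M - S) \<union> I. r \<le> dist s x} \<subseteq> M - S"
    using I_cball sphere_reg by (fastforce simp: subset_iff)
  have "frame_field_on (sphere s r) f"
    using f sphere_reg unfolding frame_field_on_def by (rule continuous_map_from_subtopology_mono)
  then obtain g where g: "frame_field_on (cball s r) g" "\<And>x. x \<in> sphere s r \<Longrightarrow> g x = f x"
    using frame_field_extends_from_sphere by blast
  define f' where "f' x = (if dist s x \<le> r then g x else f x)" for x
  have "f' x = f x" if "x \<notin> ball s r" for x
    using that g(2) by (cases "dist s x = r") (simp_all add: f'_def)
  then have agree: "f' x = f x" if "x \<notin> I" for x
    using that ball_I by blast
  show ?thesis
    unfolding redundant_def
  proof (intro conjI exI[of _ "cball s r"] exI[of _ f']; (fold I_def)?)
    show "{s} \<subseteq> S" "cball s r \<subseteq> M"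
      using s cball_M by auto
    show "closedin (top_of_set M) (cball s r)"
      using cball_M by (simp add: closed_subset)
    show "{s} \<subseteq> I"
      using ball_I r by auto
    show "frame_field_on (M - S \<union> I) f'"
      unfolding f'_def[abs_def] using f g(1) g(2) outer by (rule frame_field_patch_cball)
    show "\<forall>x\<in>M - S - I. f' x = f x"
      using agree by blast
    have "x \<notin> I" if "x \<in> mbdry M" for x
      using that cball I_cball by (auto simp: mbdry_def)
    then show "boundary_aligned M (M - S) f \<longrightarrow> boundary_aligned M (M - S \<union> I) f'"
      unfolding boundary_aligned_def using agree by auto
  qed
qed

theorem corollary3p6:
  fixes M S :: "(real^3) set" and f :: "real^3 \<Rightarrow> (real^3^3) set" and s :: "real^3"
  assumes "smooth_3manifold M"
    and "S \<subseteq> M"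
    and "frame_field_on (M - S) f"
    and "s \<in> S"
    and "\<exists>T. open T \<and> s \<in> T \<and> T \<inter> M \<inter> S = {s}"
    and "s \<notin> mbdry M"
  shows "redundant M S f {s}"
proof -
  obtain T where T: "open T" "s \<in> T" "T \<inter> M \<inter> S = {s}"
    using assms(5) by blast
  have "s \<in> interior M"
    using assms(2,4,6) by (auto simp: mbdry_def)
  then obtain e where e: "0 < e" "ball s e \<subseteq> interior M \<inter> T"
    using T(1,2) open_contains_ball_eq[of "interior M \<inter> T"] by blast
  have "cball s (e/2) \<subseteq> ball s e"
    using e(1) by (simp add: cball_subset_ball_iff)
  then have cball: "cball s (e/2) \<subseteq> interior M \<inter> T"
    using e(2) by blast
  have "sphere s (e/2) \<inter> S = {}"
    using cball T(3) e(1) interior_subset sphere_cball by fastforce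
  then show ?thesis
    using e(1) cball by (intro redundant_if_sphere_avoids_singularities[OF assms(3,4)]) auto
qed

end
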